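(* Let $f$ be an orientation-preserving $C^1$ diffeomorphism of the circle $\mathrm{S}^1=\mathbb{R}/\mathbb{Z}$ with irrational rotation number $\rho$. Then there is a sequence $(h_n)$ of orientation-preserving $C^1$ circle diffeomorphisms such that $h_n f h_n^{-1}$ converges to the rotation $R_\rho: x\mapsto x+\rho$ in the $C^1$ topology. *)

theory Defs
  imports "HOL-Analysis.Analysis"
begin

text \<open>Orientation-preserving C^1 diffeomorphisms of the circle R/Z are represented by
their lifts F : R -> R: C^1 maps with everywhere positive derivative and F(x+1) = F(x)+1.
(Such F is an increasing C^1 bijection of R with C^1 inverse.)\<close>
definition circle_diffeo_lift :: "(real \<Rightarrow> real) \<Rightarrow> bool" where
  "circle_diffeo_lift F \<longleftrightarrow>
     (\<forall>x. F differentiable (at x)) \<and>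
     continuous_on UNIV (deriv F) \<and>
     (\<forall>x. deriv F x > 0) \<and>
     (\<forall>x. F (x + 1) = F x + 1)"

text \<open>Rotation number (of the lift; the rotation number of the circle map is its class mod 1).\<close>
definition rot_num :: "(real \<Rightarrow> real) \<Rightarrow> real" where
  "rot_num F = lim (\<lambda>n. ((F ^^ n) 0) / real n)"

end

theory Submission
  imports Defs
begin

text \<open>
  Let \<open>\<phi> = ln F'\<close> and let \<open>S\<^sub>N\<close> denote its Birkhoff sums along \<open>F\<close>. If \<open>H'\<close> is proportional to
  \<open>exp \<psi>\<close>, then \<open>(H F H\<^sup>-\<^sup>1)' = exp (\<psi> \<circ> F + \<phi> - \<psi>) \<circ> H\<^sup>-\<^sup>1\<close>, and for \<open>\<psi> = (S\<^sub>0 + \<dots> + S\<^sub>N\<^sub>-\<^sub>1) / N\<close>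
  the exponent telescopes to \<open>S\<^sub>N / N\<close>. Everything therefore rests on \<open>S\<^sub>N / N \<longrightarrow> 0\<close> uniformly.

  Suppose \<open>S\<^sub>N x \<le> -cN\<close> for a large \<open>N\<close>. Then the partial sums along the orbit of \<open>x\<close> (corrected by a
  drift) drop below many successive levels, and by pigeonhole two of the orbit points at these record
  times are close modulo 1. In between, the orbit contracts a whole neighbourhood by a factor 4, so some
  power \<open>F\<^sup>k\<close> maps an interval into a small neighbourhood of its integer translate by \<open>p\<close>, and the
  intermediate value theorem gives \<open>F\<^sup>k y = y + p\<close>: a periodic orbit, which forces a rational rotation
  number. The same argument for \<open>F\<^sup>-\<^sup>1\<close>, whose Birkhoff sums of \<open>ln (F\<^sup>-\<^sup>1)'\<close> are \<open>-S\<^sub>N\<close>, gives the bound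
  from above.

  Finally, a lift whose derivative is uniformly close to 1 is uniformly close to a translation, and
  since conjugating by a lift at bounded distance from the identity does not change the average
  displacement \<open>F\<^sup>m 0 / m\<close>, the translation is close to the rotation number.
\<close>

section \<open>Periodic functions and lifts of degree one\<close>

lemma periodic_add_of_int:
  fixes g :: "real \<Rightarrow> 'a"
  assumes per: "\<And>x. g (x + 1) = g x"
  shows "g (x + of_int m) = g x"
proof (induction m rule: int_induct[where k = 0])
  case (step1 i)
  then show ?case using per[of "x + of_int i"] by (simp add: add.assoc)
next
  case (step2 i)
  then show ?case using per[of "x + of_int (i - 1)"] by (simp add: algebra_simps)
qed simp

lemma periodic_frac:
  fixes g :: "real \<Rightarrow> 'a"
  assumes "\<And>x. g (x + 1) = g x"
  shows "g (frac x) = g x"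
  using periodic_add_of_int[where g = g, OF assms, of "frac x" "\<lfloor>x\<rfloor>"] by (simp add: frac_def)

lemma periodic_range:
  fixes g :: "real \<Rightarrow> 'a"
  assumes "\<And>x. g (x + 1) = g x"
  shows "range g = g ` {0..1}"
proof -
  have "g x \<in> g ` {0..1}" for x
    using periodic_frac[where g = g, OF assms, of x] frac_lt_1[of x] frac_ge_0[of x]
    by (metis atLeastAtMost_iff image_eqI less_imp_le)
  then show ?thesis by auto
qed

lemma periodic_bounded:
  fixes g :: "real \<Rightarrow> 'a::metric_space"
  assumes "\<And>x. g (x + 1) = g x" and "continuous_on UNIV g"
  shows "bounded (range g)"
  unfolding periodic_range[where g = g, OF assms(1)]
  by (intro compact_imp_bounded compact_continuous_image continuous_on_subset[OF assms(2)]) auto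

lemma periodic_uniformly_continuous:
  fixes g :: "real \<Rightarrow> 'a::metric_space"
  assumes per: "\<And>x. g (x + 1) = g x" and cont: "continuous_on UNIV g"
  shows "uniformly_continuous_on UNIV g"
  unfolding uniformly_continuous_on_def
proof (intro allI impI)
  fix e :: real assume "e > 0"
  have "uniformly_continuous_on {-1..2} g"
    by (intro compact_uniformly_continuous continuous_on_subset[OF cont]) auto
  then obtain d where d: "d > 0"
    and close: "\<And>x y. x \<in> {-1..2} \<Longrightarrow> y \<in> {-1..2} \<Longrightarrow> dist y x < d \<Longrightarrow> dist (g y) (g x) < e"
    using \<open>e > 0\<close> unfolding uniformly_continuous_on_def by metis
  show "\<exists>d>0. \<forall>x\<in>UNIV. \<forall>y\<in>UNIV. dist y x < d \<longrightarrow> dist (g y) (g x) < e"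
  proof (intro exI[of _ "min d 1"] conjI ballI impI)
    fix x y :: real assume xy: "dist y x < min d 1"
    define m where "m = \<lfloor>x\<rfloor>"
    have "x - m \<in> {-1..2}" "y - m \<in> {-1..2}"
      using xy floor_correct[of x] unfolding m_def dist_real_def abs_less_iff by auto linarith+
    moreover have "dist (y - m) (x - m) < d" using xy by (simp add: dist_real_def)
    ultimately have "dist (g (y - m)) (g (x - m)) < e" by (rule close)
    then show "dist (g y) (g x) < e"
      using periodic_add_of_int[where g = g, OF per, of "x - m" m]
        periodic_add_of_int[where g = g, OF per, of "y - m" m] by simp
  qed (use d in simp)
qed

lemma lift_add_of_int:
  fixes G :: "real \<Rightarrow> real"
  assumes "\<And>x. G (x + 1) = G x + 1"
  shows "G (x + of_int m) = G x + of_int m"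
  using periodic_add_of_int[where g = "\<lambda>x. G x - x"] assms by (simp add: algebra_simps)

lemma funpow_lift:
  fixes G :: "real \<Rightarrow> real"
  assumes "\<And>x. G (x + 1) = G x + 1"
  shows "(G ^^ n) (x + 1) = (G ^^ n) x + 1"
  by (induction n arbitrary: x) (simp_all add: assms)

lemma mono_funpow_self:
  fixes G :: "'a::order \<Rightarrow> 'a"
  assumes "mono G"
  shows "mono (G ^^ n)"
  using funpow_mono[OF assms] by (simp add: monoI)

lemma continuous_on_funpow:
  fixes G :: "'a::topological_space \<Rightarrow> 'a"
  assumes "continuous_on UNIV G"
  shows "continuous_on UNIV (G ^^ n)"
  by (induction n) (auto intro: continuous_on_compose2[OF assms])

lemma mono_lift_dist_le:
  fixes G :: "real \<Rightarrow> real"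
  assumes lift: "\<And>x. G (x + 1) = G x + 1" and "mono G"
  shows "\<bar>G y - G x\<bar> \<le> \<bar>y - x\<bar> + 1"
proof -
  have "0 \<le> G y - G x \<and> G y - G x \<le> y - x + 1" if "x \<le> y" for x y
  proof -
    have "y \<le> x + of_int \<lceil>y - x\<rceil>" by linarith
    then have "G y \<le> G x + of_int \<lceil>y - x\<rceil>"
      using monoD[OF \<open>mono G\<close>] lift_add_of_int[where G = G, OF lift] by metis
    moreover have "G x \<le> G y" using monoD[OF \<open>mono G\<close> that] .
    ultimately show ?thesis by linarith
  qed
  from this[of x y] this[of y x] show ?thesis
    by (cases "x \<le> y") (auto simp: abs_le_iff)
qed

section \<open>Rotation number of a periodic orbit\<close>

lemma abs_divide_diff_le:
  fixes a c \<eta> B :: real and m :: nat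
  assumes "m \<ge> 1" and "\<bar>a - m * c\<bar> \<le> m * \<eta> + B"
  shows "\<bar>a / m - c\<bar> \<le> \<eta> + B / m"
proof -
  have "a / m - c = (a - m * c) / m" and "\<eta> + B / m = (m * \<eta> + B) / m"
    using assms(1) by (simp_all add: field_simps)
  then show ?thesis
    using assms(2) by (simp add: abs_div divide_right_mono)
qed

lemma convergent_if_approximable:
  fixes X :: "nat \<Rightarrow> real"
  assumes approx: "\<And>\<eta>. \<eta> > 0 \<Longrightarrow> \<exists>c B. \<forall>m\<ge>1. \<bar>X m - c\<bar> \<le> \<eta> + B / m"
  shows "convergent X"
proof -
  have "Cauchy X"
  proof (rule CauchyI)
    fix e :: real assume "e > 0"
    then obtain c B where cB: "\<forall>m\<ge>1. \<bar>X m - c\<bar> \<le> e/4 + B / m"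
      using approx[of "e/4"] by auto
    have "(\<lambda>m. \<bar>B / real m\<bar>) \<longlonglongrightarrow> 0"
      using tendsto_rabs_zero[OF lim_const_over_n[of B]] .
    moreover have "0 < e/4" using \<open>e > 0\<close> by simp
    ultimately have "eventually (\<lambda>m. \<bar>B / real m\<bar> < e/4) sequentially"
      by (rule order_tendstoD(2))
    then obtain M where M: "\<And>m. m \<ge> M \<Longrightarrow> \<bar>B / real m\<bar> < e/4"
      by (auto simp: eventually_sequentially)
    have close: "\<bar>X m - c\<bar> < e/2" if "m \<ge> max M 1" for m
    proof -
      have "\<bar>X m - c\<bar> \<le> e/4 + B / m" "\<bar>B / real m\<bar> < e/4" using cB M[of m] that by auto
      then show ?thesis by linarith
    qed
    show "\<exists>M. \<forall>m\<ge>M. \<forall>n\<ge>M. norm (X m - X n) < e"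
    proof (intro exI[of _ "max M 1"] allI impI)
      fix m n assume "m \<ge> max M 1" "n \<ge> max M 1"
      then show "norm (X m - X n) < e"
        using close[of m] close[of n] unfolding real_norm_def abs_less_iff by linarith
    qed
  qed
  then show ?thesis by (simp add: Cauchy_convergent_iff)
qed

lemma lim_dist_le_if_approximable:
  fixes X :: "nat \<Rightarrow> real"
  assumes "convergent X" and approx: "\<forall>m\<ge>1. \<bar>X m - c\<bar> \<le> \<eta> + B / m"
  shows "\<bar>lim X - c\<bar> \<le> \<eta>"
proof -
  have "(\<lambda>m. \<bar>X m - c\<bar>) \<longlonglongrightarrow> \<bar>lim X - c\<bar>"
    using \<open>convergent X\<close> by (intro tendsto_intros) (simp add: convergent_LIMSEQ_iff)
  moreover have "(\<lambda>m. \<eta> + B / real m) \<longlonglongrightarrow> \<eta> + 0"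
    by (intro tendsto_intros)
  ultimately show ?thesis
    using approx by (intro LIMSEQ_le) auto
qed

lemma lim_dist_le_if_approximations:
  fixes X :: "nat \<Rightarrow> real"
  assumes approx: "\<And>n. \<forall>m\<ge>1. \<bar>X m - c n\<bar> \<le> \<eta> n + B n / m" and "\<eta> \<longlonglongrightarrow> 0"
  shows "\<bar>lim X - c n\<bar> \<le> \<eta> n"
proof (rule lim_dist_le_if_approximable[OF _ approx])
  show "convergent X"
  proof (rule convergent_if_approximable)
    fix e :: real assume "e > 0"
    then have "eventually (\<lambda>n. \<eta> n < e) sequentially"
      using order_tendstoD(2)[OF \<open>\<eta> \<longlonglongrightarrow> 0\<close>] by blast
    then obtain n where "\<eta> n < e"
      by (auto simp: eventually_sequentially)
    then have "\<forall>m\<ge>1. \<bar>X m - c n\<bar> \<le> e + B n / m"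
      using approx[of n] by (auto intro: order_trans)
    then show "\<exists>c B. \<forall>m\<ge>1. \<bar>X m - c\<bar> \<le> e + B / m" by blast
  qed
qed

definition has_periodic_orbit :: "(real \<Rightarrow> real) \<Rightarrow> bool" where
  "has_periodic_orbit G \<longleftrightarrow> (\<exists>k>0. \<exists>p::int. \<exists>y. (G ^^ k) y = y + of_int p)"

lemma periodic_orbit_bounded_deviation:
  fixes F :: "real \<Rightarrow> real"
  assumes lift: "\<And>x. F (x + 1) = F x + 1" and "mono F"
    and "k > 0" and periodic: "(F ^^ k) y = y + of_int p"
  obtains C where "\<And>m. \<bar>(F ^^ m) 0 - m * (p / k)\<bar> \<le> C"
proof -
  have lift_pow: "(F ^^ n) (x + of_int m) = (F ^^ n) x + of_int m" for n x m
    using lift_add_of_int[where G = "F ^^ n"] funpow_lift[where G = F, OF lift] by blast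
  have multiple: "(F ^^ (q * k)) y = y + q * p" for q
  proof (induction q)
    case (Suc q)
    have "(F ^^ (Suc q * k)) y = (F ^^ k) (y + of_int (int q * p))"
      using Suc by (simp add: funpow_add)
    also have "\<dots> = y + (Suc q) * p"
      using lift_pow[of k y "int q * p"] periodic by (simp add: algebra_simps)
    finally show ?case .
  qed simp
  define C where "C = (\<Sum>r<k. \<bar>(F ^^ r) y - r * (p / k)\<bar>) + \<bar>y\<bar> + 1"
  have "\<bar>(F ^^ m) 0 - m * (p / k)\<bar> \<le> C" for m
  proof -
    define q r where "q = m div k" and "r = m mod k"
    have m: "m = r + q * k" and "r < k" using \<open>k > 0\<close> by (simp_all add: q_def r_def)
    have "(F ^^ m) y = (F ^^ r) y + q * p"
      using lift_pow[of r y "int q * p"] by (simp add: m funpow_add multiple)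
    then have "(F ^^ m) y - m * (p / k) = (F ^^ r) y - r * (p / k)"
      using \<open>k > 0\<close> by (simp add: m field_simps)
    also have "\<bar>\<dots>\<bar> \<le> (\<Sum>r<k. \<bar>(F ^^ r) y - r * (p / k)\<bar>)"
      by (rule member_le_sum) (use \<open>r < k\<close> in auto)
    finally show ?thesis
      using mono_lift_dist_le[where G = "F ^^ m", OF funpow_lift[where G = F, OF lift]
          mono_funpow_self[OF \<open>mono F\<close>], of 0 y]
      by (simp add: C_def abs_le_iff)
  qed
  then show ?thesis by (rule that)
qed

lemma rot_num_periodic_orbit:
  fixes F :: "real \<Rightarrow> real"
  assumes "\<And>x. F (x + 1) = F x + 1" and "mono F"
    and "k > 0" and "(F ^^ k) y = y + of_int p"
  shows "rot_num F = of_int p / k"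
proof -
  obtain C where C: "\<And>m. \<bar>(F ^^ m) 0 - m * (p / k)\<bar> \<le> C"
    using periodic_orbit_bounded_deviation[OF assms] by blast
  have approx: "\<forall>m\<ge>1. \<bar>(F ^^ m) 0 / m - p / k\<bar> \<le> \<eta> + C / m" if "\<eta> > 0" for \<eta>
  proof (intro allI impI)
    fix m :: nat assume "m \<ge> 1"
    moreover have "\<bar>(F ^^ m) 0 - m * (p / k)\<bar> \<le> m * \<eta> + C"
      using C[of m] that by (simp add: add_increasing)
    ultimately show "\<bar>(F ^^ m) 0 / m - p / k\<bar> \<le> \<eta> + C / m" by (rule abs_divide_diff_le)
  qed
  then have "convergent (\<lambda>m. (F ^^ m) 0 / m)"
    by (blast intro: convergent_if_approximable)
  then have "\<bar>rot_num F - p / k\<bar> \<le> \<eta>" if "\<eta> > 0" for \<eta>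
    unfolding rot_num_def using approx[OF that] by (rule lim_dist_le_if_approximable)
  then have "\<bar>rot_num F - p / k\<bar> \<le> 0"
    by (rule field_le_epsilon) simp
  then show ?thesis by simp
qed

corollary no_periodic_orbit_if_irrational:
  fixes F :: "real \<Rightarrow> real"
  assumes "\<And>x. F (x + 1) = F x + 1" and "mono F" and "rot_num F \<notin> \<rat>"
  shows "\<not> has_periodic_orbit F"
  using rot_num_periodic_orbit[OF assms(1,2)] assms(3) unfolding has_periodic_orbit_def by force

section \<open>Birkhoff sums\<close>

definition birkhoff_sum :: "('a \<Rightarrow> 'a) \<Rightarrow> ('a \<Rightarrow> real) \<Rightarrow> nat \<Rightarrow> 'a \<Rightarrow> real" where
  "birkhoff_sum G \<psi> n x = (\<Sum>j<n. \<psi> ((G ^^ j) x))"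

lemma birkhoff_sum_0 [simp]: "birkhoff_sum G \<psi> 0 x = 0"
  by (simp add: birkhoff_sum_def)

lemma birkhoff_sum_Suc: "birkhoff_sum G \<psi> (Suc n) x = birkhoff_sum G \<psi> n x + \<psi> ((G ^^ n) x)"
  by (simp add: birkhoff_sum_def)

lemma birkhoff_sum_add:
  "birkhoff_sum G \<psi> (m + n) x = birkhoff_sum G \<psi> m x + birkhoff_sum G \<psi> n ((G ^^ m) x)"
  by (induction n) (simp_all add: birkhoff_sum_Suc funpow_add add.commute)

lemma birkhoff_sum_Suc': "birkhoff_sum G \<psi> (Suc n) x = \<psi> x + birkhoff_sum G \<psi> n (G x)"
  using birkhoff_sum_add[of G \<psi> 1 n x] by (simp add: birkhoff_sum_def)

lemma birkhoff_sum_uminus: "birkhoff_sum G (\<lambda>x. - \<psi> x) n x = - birkhoff_sum G \<psi> n x"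
  by (simp add: birkhoff_sum_def sum_negf)

lemma birkhoff_sum_inverse:
  assumes "\<And>x. Gi (G x) = x"
  shows "birkhoff_sum Gi (\<lambda>y. \<psi> (Gi y)) n ((G ^^ n) x) = birkhoff_sum G \<psi> n x"
proof (induction n)
  case (Suc n)
  have "birkhoff_sum Gi (\<lambda>y. \<psi> (Gi y)) (Suc n) ((G ^^ Suc n) x)
      = \<psi> ((G ^^ n) x) + birkhoff_sum Gi (\<lambda>y. \<psi> (Gi y)) n ((G ^^ n) x)"
    by (simp only: birkhoff_sum_Suc' funpow.simps(2) comp_apply assms)
  then show ?case by (simp add: Suc birkhoff_sum_Suc)
qed simp

lemma sum_birkhoff_sum_shift:
  "(\<Sum>i<N. birkhoff_sum G \<psi> i (G x) - birkhoff_sum G \<psi> i x) = birkhoff_sum G \<psi> N x - N * \<psi> x"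
proof -
  have "birkhoff_sum G \<psi> N x = (\<Sum>i<N. birkhoff_sum G \<psi> (Suc i) x - birkhoff_sum G \<psi> i x)"
    using sum_lessThan_telescope[of "\<lambda>i. birkhoff_sum G \<psi> i x" N] by simp
  also have "\<dots> = (\<Sum>i<N. \<psi> x + (birkhoff_sum G \<psi> i (G x) - birkhoff_sum G \<psi> i x))"
    by (simp only: birkhoff_sum_Suc' add_diff_eq)
  finally show ?thesis by (simp add: sum.distrib)
qed

lemma continuous_on_birkhoff_sum:
  fixes G :: "'a::topological_space \<Rightarrow> 'a"
  assumes "continuous_on UNIV G" and "continuous_on UNIV \<psi>"
  shows "continuous_on UNIV (birkhoff_sum G \<psi> n)"
  unfolding birkhoff_sum_def[abs_def]
  by (intro continuous_on_sum continuous_on_compose2[OF assms(2) continuous_on_funpow[OF assms(1)]])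
    auto

lemma birkhoff_sum_periodic:
  fixes G \<psi> :: "real \<Rightarrow> real"
  assumes "\<And>x. G (x + 1) = G x + 1" and "\<And>x. \<psi> (x + 1) = \<psi> x"
  shows "birkhoff_sum G \<psi> n (x + 1) = birkhoff_sum G \<psi> n x"
  by (simp add: birkhoff_sum_def funpow_lift[where G = G, OF assms(1)] assms(2))

section \<open>Very negative Birkhoff sums produce periodic orbits\<close>

definition local_expansion_le :: "(real \<Rightarrow> real) \<Rightarrow> (real \<Rightarrow> real) \<Rightarrow> bool" where
  "local_expansion_le G \<psi> \<longleftrightarrow> (\<forall>e>0. \<exists>d>0. \<forall>w y y'. \<bar>y - w\<bar> \<le> d \<longrightarrow> \<bar>y' - w\<bar> \<le> d \<longrightarrow> y \<le> y' \<longrightarrow>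
     G y' - G y \<le> exp (\<psi> w + e) * (y' - y))"

lemma funpow_interval_growth:
  fixes G \<psi> :: "real \<Rightarrow> real"
  assumes "mono G" and "r \<ge> 0"
    and expansion: "\<And>w y y'. \<bar>y - w\<bar> \<le> 2 * r \<Longrightarrow> \<bar>y' - w\<bar> \<le> 2 * r \<Longrightarrow> y \<le> y' \<Longrightarrow>
                      G y' - G y \<le> exp (\<psi> w + e) * (y' - y)"
    and no_growth: "\<And>i. i < k \<Longrightarrow> birkhoff_sum G \<psi> i a + e * i \<le> 0"
  shows "(G ^^ k) (a + r) - (G ^^ k) (a - r) \<le> 2 * r * exp (birkhoff_sum G \<psi> k a + e * k)"
  using no_growth
proof (induction k)
  case (Suc k)
  define U V W where "U = (G ^^ k) (a - r)" and "V = (G ^^ k) (a + r)" and "W = (G ^^ k) a"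
  have IH: "V - U \<le> 2 * r * exp (birkhoff_sum G \<psi> k a + e * k)"
    using Suc by (simp add: U_def V_def)
  also have "\<dots> \<le> 2 * r"
    using Suc.prems[of k] \<open>r \<ge> 0\<close> by (simp add: mult_left_le)
  finally have "V - U \<le> 2 * r" .
  moreover have "U \<le> W" "W \<le> V"
    using funpow_mono[OF \<open>mono G\<close>] \<open>r \<ge> 0\<close> by (simp_all add: U_def V_def W_def)
  ultimately have "G V - G U \<le> exp (\<psi> W + e) * (V - U)"
    by (intro expansion) auto
  also have "\<dots> \<le> exp (\<psi> W + e) * (2 * r * exp (birkhoff_sum G \<psi> k a + e * k))"
    using IH by (simp add: mult_left_mono)
  also have "\<dots> = 2 * r * exp (birkhoff_sum G \<psi> (Suc k) a + e * Suc k)"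
    by (simp add: birkhoff_sum_Suc W_def exp_add[symmetric] algebra_simps)
  finally show ?case by (simp add: U_def V_def)
qed simp

lemma exists_translation_point:
  fixes g :: "real \<Rightarrow> real"
  assumes "continuous_on UNIV g" and "mono g" and "r > 0"
    and contraction: "g (a + r) - g (a - r) \<le> r / 2" and near: "\<bar>g a - a - p\<bar> < r / 2"
  obtains y where "g y = y + p"
proof -
  have "g (a - r) \<le> g a" "g a \<le> g (a + r)"
    using monoD[OF \<open>mono g\<close>] \<open>r > 0\<close> by simp_all
  then have "g (a + r) - (a + r) - p \<le> 0" "0 \<le> g (a - r) - (a - r) - p"
    using contraction near unfolding abs_less_iff by linarith+
  moreover have "continuous_on {a - r..a + r} (\<lambda>y. g y - y - p)"
    by (intro continuous_intros continuous_on_subset[OF assms(1)]) auto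
  ultimately obtain y where "g y - y - p = 0"
    using IVT2'[of "\<lambda>y. g y - y - p" "a + r" 0 "a - r"] \<open>r > 0\<close> by auto
  then show ?thesis by (intro that[of y]) simp
qed

lemma pigeonhole_frac:
  fixes f :: "nat \<Rightarrow> real" and L :: nat
  assumes "L > 0"
  obtains t t' where "t < t'" "t' \<le> L" "\<bar>frac (f t') - frac (f t)\<bar> < 1 / L"
proof -
  define bin where "bin t = nat \<lfloor>real L * frac (f t)\<rfloor>" for t
  have "real L * frac (f t) < real L" for t
    using frac_lt_1[of "f t"] \<open>L > 0\<close> by simp
  then have "bin ` {0..L} \<subseteq> {0..<L}"
    by (auto simp: bin_def nat_less_iff floor_less_iff)
  then have "card (bin ` {0..L}) < card {0..L}"
    using card_mono[OF finite_atLeastLessThan] by (metis card_atLeastAtMost card_atLeastLessThan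
        diff_zero le_imp_less_Suc)
  then have "\<not> inj_on bin {0..L}"
    by (rule pigeonhole)
  then obtain t t' where tt': "t \<in> {0..L}" "t' \<in> {0..L}" "t \<noteq> t'" "bin t = bin t'"
    unfolding inj_on_def by blast
  have "\<lfloor>real L * frac (f t)\<rfloor> = \<lfloor>real L * frac (f t')\<rfloor>"
    using tt'(4) unfolding bin_def by (subst (asm) eq_nat_nat_iff) (auto simp: frac_ge_0)
  then have "\<bar>real L * frac (f t') - real L * frac (f t)\<bar> < 1"
    using floor_correct[of "real L * frac (f t)"] floor_correct[of "real L * frac (f t')"]
    unfolding abs_less_iff by linarith
  then have "real L * \<bar>frac (f t') - frac (f t)\<bar> < 1"
    by (simp add: abs_mult right_diff_distrib[symmetric])
  then have close: "\<bar>frac (f t') - frac (f t)\<bar> < 1 / L"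
    using \<open>L > 0\<close> by (simp add: field_simps)
  show ?thesis
  proof (cases "t < t'")
    case True then show ?thesis using that tt' close by auto
  next
    case False then show ?thesis using that[of t' t] tt' close by (auto simp: abs_minus_commute)
  qed
qed

lemma descent_record_times:
  fixes s :: "nat \<Rightarrow> real"
  assumes "s 0 = 0" and step: "\<And>k. s k \<le> s (Suc k) + M" and "M \<ge> 0" and "D > 0"
    and deep: "s N < - real L * (D + M)"
  obtains K :: "nat \<Rightarrow> nat" where
    "\<And>t. t \<le> L \<Longrightarrow> K t < N"
    "\<And>t t'. t < t' \<Longrightarrow> t' \<le> L \<Longrightarrow> K t < K t' \<and> s (K t') \<le> s (K t) - D"
    "\<And>t j. t \<le> L \<Longrightarrow> K t \<le> j \<Longrightarrow> j \<le> N \<Longrightarrow> s j \<le> s (K t)"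
proof -
  define h where "h t = - real t * (D + M)" for t :: nat
  define K where "K t = Max {k. k \<le> N \<and> h t \<le> s k}" for t
  have h_antimono: "h t' \<le> h t" if "t \<le> t'" for t t'
    using that \<open>M \<ge> 0\<close> \<open>D > 0\<close> by (simp add: h_def mult_right_mono)
  have "0 \<in> {k. k \<le> N \<and> h t \<le> s k}" for t
    using h_antimono[of 0 t] \<open>s 0 = 0\<close> by (simp add: h_def)
  then have "K t \<in> {k. k \<le> N \<and> h t \<le> s k}" for t
    unfolding K_def by (intro Max_in) auto
  then have K: "K t \<le> N" "h t \<le> s (K t)" for t
    by auto
  have K_max: "j \<le> K t" if "j \<le> N" "h t \<le> s j" for j t
    using that unfolding K_def by (intro Max_ge) auto
  have after_K: "s j < h t" if "K t < j" "j \<le> N" for j t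
    using K_max[of j t] that by force
  have K_less: "K t < N" if "t \<le> L" for t
    using K[of t] deep h_antimono[OF that] by (cases "K t = N") (auto simp: h_def)
  have K_upper: "s (K t) < h t + M" if "t \<le> L" for t
    using after_K[of t "Suc (K t)"] K_less[OF that] step[of "K t"] by simp
  show ?thesis
  proof (rule that)
    show "K t < N" if "t \<le> L" for t using K_less[OF that] .
    show "s j \<le> s (K t)" if "t \<le> L" "K t \<le> j" "j \<le> N" for t j
      using after_K[of t j] K(2)[of t] that by (cases "K t = j") auto
    show "K t < K t' \<and> s (K t') \<le> s (K t) - D" if "t < t'" "t' \<le> L" for t t'
    proof -
      have "h t' \<le> h t - (D + M)"
        using that \<open>M \<ge> 0\<close> \<open>D > 0\<close> mult_right_mono[of "real t + 1" "real t'" "D + M"]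
        by (simp add: h_def algebra_simps)
      then have "s (K t') \<le> s (K t) - D"
        using K_upper[OF that(2)] K(2)[of t] by linarith
      moreover have "K t \<le> K t'"
        using K[of t] h_antimono[of t t'] that by (intro K_max) auto
      ultimately show ?thesis using \<open>D > 0\<close> by (cases "K t = K t'") auto
    qed
  qed
qed

lemma exists_contracting_return:
  fixes G \<psi> :: "real \<Rightarrow> real" and L :: nat
  assumes bounded: "\<And>x. \<bar>\<psi> x\<bar> \<le> B" and "e > 0" and "L > 0"
    and deep: "birkhoff_sum G \<psi> N x + 2 * e * N < - real L * (ln 4 + B)"
  obtains a k p where "k > 0"
    "\<And>i. i < k \<Longrightarrow> birkhoff_sum G \<psi> i a + e * i \<le> 0"
    "birkhoff_sum G \<psi> k a + e * k \<le> - ln 4"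
    "\<bar>(G ^^ k) a - a - of_int p\<bar> < 1 / L"
proof -
  define s where "s k = birkhoff_sum G \<psi> k x + 2 * e * k" for k
  have "s k \<le> s (Suc k) + B" for k
  proof -
    have "- B \<le> \<psi> ((G ^^ k) x)" using bounded[of "(G ^^ k) x"] by linarith
    then show ?thesis using \<open>e > 0\<close> by (simp add: s_def birkhoff_sum_Suc field_simps)
  qed
  moreover have "B \<ge> 0" using bounded[of 0] by linarith
  ultimately obtain K where K_less: "\<And>t. t \<le> L \<Longrightarrow> K t < N"
    and K_descent: "\<And>t t'. t < t' \<Longrightarrow> t' \<le> L \<Longrightarrow> K t < K t' \<and> s (K t') \<le> s (K t) - ln 4"
    and K_record: "\<And>t j. t \<le> L \<Longrightarrow> K t \<le> j \<Longrightarrow> j \<le> N \<Longrightarrow> s j \<le> s (K t)"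
    using descent_record_times[of s B "ln 4" N L] deep by (auto simp: s_def)
  obtain ta tb where "ta < tb" "tb \<le> L"
    and frac_close: "\<bar>frac ((G ^^ K tb) x) - frac ((G ^^ K ta) x)\<bar> < 1 / L"
    using pigeonhole_frac[OF \<open>L > 0\<close>, of "\<lambda>t. (G ^^ K t) x"] by blast
  define a k where "a = (G ^^ K ta) x" and "k = K tb - K ta"
  have "K ta < K tb" and descent: "s (K tb) \<le> s (K ta) - ln 4"
    using K_descent[OF \<open>ta < tb\<close> \<open>tb \<le> L\<close>] by auto
  moreover have "(G ^^ k) a = (G ^^ (k + K ta)) x"
    by (simp add: a_def funpow_add)
  ultimately have "k > 0" and return: "(G ^^ k) a = (G ^^ K tb) x"
    by (simp_all add: k_def)
  have growth: "birkhoff_sum G \<psi> i a + e * i \<le> s (K ta + i) - s (K ta)" for i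
    using birkhoff_sum_add[of G \<psi> "K ta" i x] \<open>e > 0\<close> by (simp add: s_def a_def algebra_simps)
  show ?thesis
  proof (rule that[OF \<open>k > 0\<close>])
    show "birkhoff_sum G \<psi> i a + e * i \<le> 0" if "i < k" for i
    proof -
      have "K ta + i \<le> N" using K_less[of tb] \<open>tb \<le> L\<close> that by (simp add: k_def)
      then show ?thesis using growth[of i] K_record[of ta "K ta + i"] \<open>ta < tb\<close> \<open>tb \<le> L\<close> by simp
    qed
    show "birkhoff_sum G \<psi> k a + e * k \<le> - ln 4"
      using growth[of k] descent \<open>K ta < K tb\<close> by (simp add: k_def)
    show "\<bar>(G ^^ k) a - a - of_int (\<lfloor>(G ^^ k) a\<rfloor> - \<lfloor>a\<rfloor>)\<bar> < 1 / L"
      using frac_close unfolding return by (simp add: a_def frac_def algebra_simps)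
  qed
qed

lemma periodic_orbit_of_contracting_return:
  fixes G \<psi> :: "real \<Rightarrow> real"
  assumes "continuous_on UNIV G" and "mono G" and "r > 0" and "k > 0"
    and expansion: "\<And>w y y'. \<bar>y - w\<bar> \<le> 2 * r \<Longrightarrow> \<bar>y' - w\<bar> \<le> 2 * r \<Longrightarrow> y \<le> y' \<Longrightarrow>
                      G y' - G y \<le> exp (\<psi> w + e) * (y' - y)"
    and no_growth: "\<And>i. i < k \<Longrightarrow> birkhoff_sum G \<psi> i a + e * i \<le> 0"
    and contraction: "birkhoff_sum G \<psi> k a + e * k \<le> - ln 4"
    and return: "\<bar>(G ^^ k) a - a - of_int p\<bar> < r / 2"
  shows "has_periodic_orbit G"
proof -
  have "(G ^^ k) (a + r) - (G ^^ k) (a - r) \<le> 2 * r * exp (birkhoff_sum G \<psi> k a + e * k)"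
    using \<open>r > 0\<close> by (intro funpow_interval_growth[OF \<open>mono G\<close> _ expansion no_growth]) auto
  also have "\<dots> \<le> 2 * r * exp (- ln 4)"
    using contraction \<open>r > 0\<close> by simp
  finally have "(G ^^ k) (a + r) - (G ^^ k) (a - r) \<le> r / 2"
    by (simp add: exp_minus)
  then obtain y where "(G ^^ k) y = y + of_int p"
    using exists_translation_point[OF continuous_on_funpow[OF assms(1)]
        mono_funpow_self[OF \<open>mono G\<close>] \<open>r > 0\<close> _ return] by blast
  then show ?thesis
    using \<open>k > 0\<close> unfolding has_periodic_orbit_def by blast
qed

lemma birkhoff_sum_lower_bound:
  fixes G \<psi> :: "real \<Rightarrow> real"
  assumes cont: "continuous_on UNIV G" and "mono G"
    and bounded: "\<And>x. \<bar>\<psi> x\<bar> \<le> B"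
    and expansion: "local_expansion_le G \<psi>"
    and no_periodic: "\<not> has_periodic_orbit G"
    and "c > 0"
  shows "\<exists>N0. \<forall>N\<ge>N0. \<forall>x. - c * N \<le> birkhoff_sum G \<psi> N x"
proof -
  obtain \<delta> where "\<delta> > 0" and \<delta>: "\<And>w y y'. \<bar>y - w\<bar> \<le> \<delta> \<Longrightarrow> \<bar>y' - w\<bar> \<le> \<delta> \<Longrightarrow> y \<le> y' \<Longrightarrow>
      G y' - G y \<le> exp (\<psi> w + c/4) * (y' - y)"
    using expansion \<open>c > 0\<close> unfolding local_expansion_le_def
    by (metis divide_pos_pos zero_less_numeral)
  define r where "r = \<delta> / 2"
  define L :: nat where "L = nat \<lceil>2 / r\<rceil> + 1"
  have "r > 0" "L > 0" using \<open>\<delta> > 0\<close> by (simp_all add: r_def L_def)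
  have "real L > 2 / r" unfolding L_def by linarith
  then have "1 / L < r / 2" using \<open>r > 0\<close> \<open>L > 0\<close> by (simp add: field_simps)
  define N0 :: nat where "N0 = nat \<lceil>2 * L * (ln 4 + B) / c\<rceil> + 1"
  show ?thesis
  proof (intro exI[of _ N0] allI impI; rule ccontr)
    fix N x assume "N \<ge> N0" and "\<not> - c * N \<le> birkhoff_sum G \<psi> N x"
    moreover have "real N > 2 * L * (ln 4 + B) / c" using \<open>N \<ge> N0\<close> unfolding N0_def by linarith
    ultimately have deep: "birkhoff_sum G \<psi> N x + 2 * (c/4) * N < - real L * (ln 4 + B)"
      using \<open>c > 0\<close> by (simp add: field_simps)
    have "c/4 > 0" using \<open>c > 0\<close> by simp
    obtain a k p where "k > 0"
      and no_growth: "\<And>i. i < k \<Longrightarrow> birkhoff_sum G \<psi> i a + c/4 * i \<le> 0"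
      and contraction: "birkhoff_sum G \<psi> k a + c/4 * k \<le> - ln 4"
      and "\<bar>(G ^^ k) a - a - of_int p\<bar> < 1 / L"
      by (rule exists_contracting_return[OF bounded \<open>c/4 > 0\<close> \<open>L > 0\<close> deep]) blast
    then have return: "\<bar>(G ^^ k) a - a - of_int p\<bar> < r / 2"
      using \<open>1 / L < r / 2\<close> by linarith
    have "has_periodic_orbit G"
      using periodic_orbit_of_contracting_return[OF cont \<open>mono G\<close> \<open>r > 0\<close> \<open>k > 0\<close> _ no_growth
          contraction return] \<delta> by (simp add: r_def)
    then show False using no_periodic by blast
  qed
qed

section \<open>Lifts with prescribed derivative, and almost-translations\<close>

lemma exists_lift_with_derivative:
  fixes e :: "real \<Rightarrow> real"
  assumes cont: "continuous_on UNIV e" and pos: "\<And>x. e x > 0" and per: "\<And>x. e (x + 1) = e x"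
  obtains H C where "C > 0" "circle_diffeo_lift H" "\<And>x. (H has_real_derivative e x / C) (at x)"
proof -
  obtain A where A: "\<And>x. (A has_real_derivative e x) (at x)"
  proof -
    have "isCont e x" for x using cont by (simp add: continuous_on_eq_continuous_at)
    then have "\<exists>A. \<forall>x. - \<infinity> < ereal x \<longrightarrow> ereal x < \<infinity> \<longrightarrow> (A has_vector_derivative e x) (at x)"
      by (intro einterval_antiderivative) auto
    then show ?thesis using that by (auto simp: has_real_derivative_iff_has_vector_derivative)
  qed
  define C where "C = A 1 - A 0"
  have "C > 0"
  proof -
    obtain z where "A 1 - A 0 = (1 - 0) * e z" using MVT2[of 0 1 A e] A by auto
    then show ?thesis using pos[of z] by (simp add: C_def)
  qed
  have A_shift: "A (x + 1) = A x + C" for x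
  proof -
    have "((\<lambda>x. A (x + 1) - A x) has_real_derivative e (x + 1) - e x) (at x)" for x
      using DERIV_shift[THEN iffD1, OF A[of "x + 1"]] A[of x] by (intro DERIV_diff)
    then have "A (x + 1) - A x = A (0 + 1) - A 0"
      by (intro DERIV_isconst_all[where f = "\<lambda>x. A (x + 1) - A x"]) (simp add: per)
    then show ?thesis by (simp add: C_def)
  qed
  define H where "H x = (A x - A 0) / C" for x
  have H': "(H has_real_derivative e x / C) (at x)" for x
    unfolding H_def[abs_def] using A[of x] \<open>C > 0\<close> by (auto intro!: derivative_eq_intros)
  then have deriv_H: "deriv H = (\<lambda>x. e x / C)" by (simp add: DERIV_imp_deriv fun_eq_iff)
  have "circle_diffeo_lift H"
    unfolding circle_diffeo_lift_def deriv_H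
  proof (intro conjI allI)
    show "H differentiable at x" for x using H' real_differentiable_def by blast
    show "continuous_on UNIV (\<lambda>x. e x / C)" by (intro continuous_intros cont) (use \<open>C > 0\<close> in auto)
    show "e x / C > 0" for x using pos \<open>C > 0\<close> by simp
    show "H (x + 1) = H x + 1" for x using \<open>C > 0\<close> A_shift[of x] by (simp add: H_def field_simps)
  qed
  then show ?thesis using that \<open>C > 0\<close> H' by blast
qed

lemma lift_displacement_le:
  fixes G g :: "real \<Rightarrow> real"
  assumes lift: "\<And>y. G (y + 1) = G y + 1"
    and G': "\<And>y. (G has_real_derivative g y) (at y)" and near_1: "\<And>y. \<bar>g y - 1\<bar> \<le> \<eta>"
  shows "\<bar>G y - y - G 0\<bar> \<le> \<eta>"
proof -
  define Q where "Q y = G y - y" for y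
  have Q_periodic: "Q (y + 1) = Q y" for y by (simp add: Q_def lift)
  have Q': "(Q has_real_derivative g y - 1) (at y)" for y
    unfolding Q_def[abs_def] using G'[of y] by (auto intro!: derivative_eq_intros)
  have "\<bar>Q (frac y) - Q 0\<bar> \<le> \<eta>"
  proof (cases "frac y = 0")
    case True then show ?thesis using near_1[of 0] by (simp only: True diff_self abs_zero)
  next
    case False
    then have "0 < frac y" using frac_ge_0[of y] by linarith
    then obtain z where "Q (frac y) - Q 0 = frac y * (g z - 1)"
      using MVT2[of 0 "frac y" Q "\<lambda>y. g y - 1"] Q' by auto
    also have "\<bar>\<dots>\<bar> \<le> 1 * \<eta>"
      using near_1[of z] frac_lt_1[of y] \<open>0 < frac y\<close> unfolding abs_mult
      by (intro mult_mono) auto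
    finally show ?thesis by simp
  qed
  then show ?thesis unfolding periodic_frac[where g = Q, OF Q_periodic] by (simp add: Q_def)
qed

lemma funpow_displacement_le:
  fixes G :: "real \<Rightarrow> real"
  assumes "\<And>y. \<bar>G y - y - c\<bar> \<le> \<eta>"
  shows "\<bar>(G ^^ m) y - y - m * c\<bar> \<le> m * \<eta>"
proof (induction m)
  case (Suc m)
  then show ?case using assms[of "(G ^^ m) y"] by (simp add: abs_le_iff algebra_simps)
qed simp

lemma abs_exp_minus_one_le:
  fixes t \<eta> :: real
  assumes "\<eta> > 0" and "\<bar>t\<bar> \<le> ln (1 + \<eta>)"
  shows "\<bar>exp t - 1\<bar> \<le> \<eta>"
proof -
  have "exp t \<le> 1 + \<eta>"
    using assms exp_le_cancel_iff[of t "ln (1 + \<eta>)"] by (simp add: abs_le_iff)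
  moreover have "1 / (1 + \<eta>) \<le> exp t"
    using assms exp_le_cancel_iff[of "- ln (1 + \<eta>)" t]
    by (simp add: abs_le_iff exp_minus divide_inverse)
  moreover have "1 - \<eta> \<le> 1 / (1 + \<eta>)"
    using assms by (simp add: field_simps)
  ultimately show ?thesis by (simp add: abs_le_iff)
qed

lemma uniform_limit_if_dist_le:
  assumes "\<And>n x. dist (f n x) (g x) \<le> b n" and "b \<longlonglongrightarrow> 0"
  shows "uniform_limit S f g sequentially"
proof (rule uniform_limitI)
  fix e :: real assume "e > 0"
  then have "eventually (\<lambda>n. b n < e) sequentially"
    using order_tendstoD(2)[OF assms(2)] by simp
  then show "\<forall>\<^sub>F n in sequentially. \<forall>x\<in>S. dist (f n x) (g x) < e"
    by eventually_elim (use assms(1) le_less_trans in blast)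
qed

section \<open>Circle diffeomorphisms\<close>

definition ln_deriv :: "(real \<Rightarrow> real) \<Rightarrow> real \<Rightarrow> real" where
  "ln_deriv F x = ln (deriv F x)"

locale circle_diffeo =
  fixes F :: "real \<Rightarrow> real"
  assumes circle_diffeo_lift: "circle_diffeo_lift F"
begin

lemma has_real_derivative: "(F has_real_derivative deriv F x) (at x)"
  using circle_diffeo_lift by (simp add: circle_diffeo_lift_def DERIV_deriv_iff_real_differentiable)

lemma deriv_pos: "deriv F x > 0"
  using circle_diffeo_lift by (simp add: circle_diffeo_lift_def)

lemma continuous_on_deriv: "continuous_on UNIV (deriv F)"
  using circle_diffeo_lift by (simp add: circle_diffeo_lift_def)

lemma lift: "F (x + 1) = F x + 1"
  using circle_diffeo_lift by (simp add: circle_diffeo_lift_def)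

lemma continuous_on: "continuous_on UNIV F"
  using has_real_derivative by (meson DERIV_continuous continuous_at_imp_continuous_on)

lemma deriv_nonzero: "deriv F x \<noteq> 0"
  using deriv_pos[of x] by simp

lemma strict_mono: "strict_mono F"
proof (rule strict_monoI)
  fix x y :: real assume "x < y"
  then show "F x < F y"
    using DERIV_pos_imp_increasing[OF \<open>x < y\<close>] has_real_derivative deriv_pos by blast
qed

lemma mono: "mono F"
  using strict_mono by (rule strict_mono_mono)

lemma deriv_periodic: "deriv F (x + 1) = deriv F x"
proof -
  have "((\<lambda>y. F (y + 1)) has_real_derivative deriv F (x + 1)) (at x)"
    using DERIV_shift[THEN iffD1, OF has_real_derivative[of "x + 1"]] .
  moreover have "((\<lambda>y. F (y + 1)) has_real_derivative deriv F x) (at x)"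
    using DERIV_add[OF has_real_derivative[of x] DERIV_const[of 1 "at x"]] by (simp add: lift)
  ultimately show ?thesis by (rule DERIV_unique)
qed

lemma surj: "surj F"
proof -
  have "\<exists>x. F x = y" for y
  proof -
    define n where "n = \<lceil>\<bar>y - F 0\<bar>\<rceil>"
    have "F (- of_int n) = F 0 - n" "F (of_int n) = F 0 + n"
      using lift_add_of_int[where G = F, OF lift, of 0 "- n"]
        lift_add_of_int[where G = F, OF lift, of 0 n] by simp_all
    then have "F (- of_int n) \<le> y" "y \<le> F (of_int n)" "- of_int n \<le> (of_int n :: real)"
      unfolding n_def by auto linarith+
    then show ?thesis
      using IVT'[OF _ _ _ continuous_on_subset[OF continuous_on subset_UNIV]] by blast
  qed
  then show ?thesis by (metis surjI)
qed

lemma F_inv [simp]: "F (inv F y) = y"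
  using surj by (simp add: surj_f_inv_f)

lemma inv_F [simp]: "inv F (F x) = x"
  using strict_mono by (simp add: strict_mono_imp_inj_on inv_f_f)

lemma inv_lift: "inv F (y + 1) = inv F y + 1"
  using inv_F[of "inv F y + 1"] by (simp add: lift)

lemma inv_has_real_derivative: "(inv F has_real_derivative inverse (deriv F (inv F y))) (at y)"
proof (rule DERIV_inverse_function[where a = "y - 1" and b = "y + 1"])
  show "(F has_real_derivative deriv F (inv F y)) (at (inv F y))"
    by (rule has_real_derivative)
  show "deriv F (inv F y) \<noteq> 0"
    by (rule deriv_nonzero)
  show "isCont (inv F) y"
    using isCont_inverse_function[where f = F and g = "inv F" and x = "inv F y" and d = 1]
      continuous_on by (simp add: continuous_on_eq_continuous_at)
qed auto

lemma circle_diffeo_lift_inv: "circle_diffeo_lift (inv F)"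
proof -
  have deriv_inv: "deriv (inv F) = (\<lambda>y. inverse (deriv F (inv F y)))"
    using inv_has_real_derivative by (simp add: DERIV_imp_deriv fun_eq_iff)
  have continuous_inv: "continuous_on UNIV (inv F)"
    using inv_has_real_derivative by (meson DERIV_continuous continuous_at_imp_continuous_on)
  show ?thesis
    unfolding circle_diffeo_lift_def deriv_inv
  proof (intro conjI allI)
    show "inv F differentiable at y" for y
      using inv_has_real_derivative real_differentiable_def by blast
    show "continuous_on UNIV (\<lambda>y. inverse (deriv F (inv F y)))"
      using deriv_nonzero continuous_on_compose2[OF continuous_on_deriv continuous_inv]
      by (intro continuous_on_inverse) auto
    show "inverse (deriv F (inv F y)) > 0" for y using deriv_pos by simp
    show "inv F (y + 1) = inv F y + 1" for y by (rule inv_lift)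
  qed
qed

lemma exp_ln_deriv: "exp (ln_deriv F x) = deriv F x"
  using deriv_pos by (simp add: ln_deriv_def)

lemma continuous_on_ln_deriv: "continuous_on UNIV (ln_deriv F)"
  unfolding ln_deriv_def[abs_def] using deriv_nonzero
  by (intro continuous_intros continuous_on_deriv) auto

lemma ln_deriv_periodic: "ln_deriv F (x + 1) = ln_deriv F x"
  by (simp add: ln_deriv_def deriv_periodic)

lemma ln_deriv_bounded:
  obtains B where "\<And>x. \<bar>ln_deriv F x\<bar> \<le> B"
  using periodic_bounded[where g = "ln_deriv F", OF ln_deriv_periodic continuous_on_ln_deriv]
  unfolding bounded_real by auto

lemma ln_deriv_inv: "ln_deriv (inv F) y = - ln_deriv F (inv F y)"
  using DERIV_imp_deriv[OF inv_has_real_derivative] deriv_pos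
  by (simp add: ln_deriv_def ln_inverse)

lemma local_expansion_le_ln_deriv: "local_expansion_le F (ln_deriv F)"
  unfolding local_expansion_le_def
proof (intro allI impI)
  fix e :: real assume "e > 0"
  have "uniformly_continuous_on UNIV (ln_deriv F)"
    by (rule periodic_uniformly_continuous[OF ln_deriv_periodic continuous_on_ln_deriv])
  then obtain d where "d > 0"
    and d: "\<And>x y. dist y x < d \<Longrightarrow> dist (ln_deriv F y) (ln_deriv F x) < e"
    using \<open>e > 0\<close> unfolding uniformly_continuous_on_def by (metis UNIV_I)
  show "\<exists>d>0. \<forall>w y y'. \<bar>y - w\<bar> \<le> d \<longrightarrow> \<bar>y' - w\<bar> \<le> d \<longrightarrow> y \<le> y' \<longrightarrow>
      F y' - F y \<le> exp (ln_deriv F w + e) * (y' - y)"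
  proof (intro exI[of _ "d / 2"] conjI allI impI)
    fix w y y' :: real assume near: "\<bar>y - w\<bar> \<le> d / 2" "\<bar>y' - w\<bar> \<le> d / 2" and "y \<le> y'"
    show "F y' - F y \<le> exp (ln_deriv F w + e) * (y' - y)"
    proof (cases "y = y'")
      case False
      then have "y < y'" using \<open>y \<le> y'\<close> by simp
      then obtain \<xi> where "y < \<xi>" "\<xi> < y'" and mvt: "F y' - F y = (y' - y) * deriv F \<xi>"
        using MVT2[of y y' F "deriv F"] has_real_derivative by blast
      then have "dist \<xi> w < d"
        using near \<open>d > 0\<close> unfolding dist_real_def abs_le_iff abs_less_iff by linarith
      then have "ln_deriv F \<xi> \<le> ln_deriv F w + e" using d[of \<xi> w] by (simp add: dist_real_def)
      then have "deriv F \<xi> * (y' - y) \<le> exp (ln_deriv F w + e) * (y' - y)"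
        using \<open>y \<le> y'\<close> by (intro mult_right_mono) (auto simp: exp_ln_deriv[symmetric])
      then show ?thesis using mvt by (simp add: mult.commute)
    qed simp
  qed (use \<open>d > 0\<close> in simp)
qed

lemma funpow_F_funpow_inv [simp]: "(F ^^ k) ((inv F ^^ k) y) = y"
proof (induction k)
  case (Suc k)
  have "(F ^^ Suc k) ((inv F ^^ Suc k) y) = (F ^^ k) (F (inv F ((inv F ^^ k) y)))"
    by (simp only: funpow_Suc_right[of k F] funpow.simps(2)[where f = "inv F"] comp_apply)
  then show ?case by (simp add: Suc)
qed simp

lemma has_periodic_orbit_inv:
  assumes "has_periodic_orbit (inv F)"
  shows "has_periodic_orbit F"
proof -
  obtain k p y where "k > 0" and periodic: "(inv F ^^ k) y = y + of_int p"
    using assms unfolding has_periodic_orbit_def by blast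
  have "y = (F ^^ k) (y + of_int p)"
    using funpow_F_funpow_inv[of k y] periodic by simp
  also have "\<dots> = (F ^^ k) y + of_int p"
    using lift_add_of_int[where G = "F ^^ k"] funpow_lift[where G = F, OF lift] by blast
  finally have "(F ^^ k) y = y + of_int (- p)" by simp
  then show ?thesis using \<open>k > 0\<close> unfolding has_periodic_orbit_def by blast
qed

lemma birkhoff_sum_ln_deriv_sublinear:
  fixes c :: real
  assumes "rot_num F \<notin> \<rat>" and "c > 0"
  shows "\<exists>N0. \<forall>N\<ge>N0. \<forall>x. \<bar>birkhoff_sum F (ln_deriv F) N x\<bar> \<le> c * N"
proof -
  interpret inverse: circle_diffeo "inv F"
    by (rule circle_diffeo.intro[OF circle_diffeo_lift_inv])
  have no_periodic: "\<not> has_periodic_orbit F"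
    using no_periodic_orbit_if_irrational[OF lift mono assms(1)] .
  obtain B where B: "\<And>x. \<bar>ln_deriv F x\<bar> \<le> B" using ln_deriv_bounded by blast
  obtain N1 where N1: "\<forall>N\<ge>N1. \<forall>x. - c * N \<le> birkhoff_sum F (ln_deriv F) N x"
    using birkhoff_sum_lower_bound[of F "ln_deriv F" B c] continuous_on mono B
      local_expansion_le_ln_deriv no_periodic \<open>c > 0\<close> by blast
  obtain B' where B': "\<And>y. \<bar>ln_deriv (inv F) y\<bar> \<le> B'" using inverse.ln_deriv_bounded by blast
  have "\<not> has_periodic_orbit (inv F)"
    using has_periodic_orbit_inv no_periodic by blast
  then obtain N2 where N2: "\<forall>N\<ge>N2. \<forall>y. - c * N \<le> birkhoff_sum (inv F) (ln_deriv (inv F)) N y"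
    using birkhoff_sum_lower_bound[OF inverse.continuous_on inverse.mono B'
        inverse.local_expansion_le_ln_deriv _ \<open>c > 0\<close>] by blast
  have inverse_sum: "birkhoff_sum (inv F) (ln_deriv (inv F)) N ((F ^^ N) x)
      = - birkhoff_sum F (ln_deriv F) N x" for N x
    using birkhoff_sum_inverse[of "inv F" F "ln_deriv F" N x]
      birkhoff_sum_uminus[of "inv F" "\<lambda>y. ln_deriv F (inv F y)" N "(F ^^ N) x"]
    by (simp add: ln_deriv_inv[abs_def])
  show ?thesis
  proof (intro exI[of _ "max N1 N2"] allI impI)
    fix N x assume "N \<ge> max N1 N2"
    then show "\<bar>birkhoff_sum F (ln_deriv F) N x\<bar> \<le> c * N"
      using N1[rule_format, of N x] N2[rule_format, of N "(F ^^ N) x"] inverse_sum[of N x]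
      by (simp add: abs_le_iff)
  qed
qed

section \<open>Conjugation towards a rotation\<close>

lemma conjugate_has_derivative:
  assumes "circle_diffeo_lift H" and H': "\<And>x. (H has_real_derivative h x) (at x)"
  shows "((\<lambda>y. H (F (inv H y))) has_real_derivative h (F x) * deriv F x / h x) (at (H x))"
proof -
  interpret H: circle_diffeo H by (rule circle_diffeo.intro) fact
  have "deriv H x = h x" using H' by (rule DERIV_imp_deriv)
  then have "(inv H has_real_derivative inverse (h x)) (at (H x))"
    using H.inv_has_real_derivative[of "H x"] by simp
  from DERIV_chain'[OF DERIV_chain'[OF this has_real_derivative] H']
  show ?thesis by (simp add: divide_inverse mult.assoc)
qed

lemma exists_conjugate_derivative_birkhoff_average:
  assumes "N > 0"
  obtains H where "circle_diffeo_lift H"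
    "\<And>x. ((\<lambda>y. H (F (inv H y))) has_real_derivative
      exp (birkhoff_sum F (ln_deriv F) N x / N)) (at (H x))"
proof -
  define \<psi> where "\<psi> x = (\<Sum>i<N. birkhoff_sum F (ln_deriv F) i x) / N" for x
  have cont: "continuous_on UNIV (\<lambda>x. exp (\<psi> x))"
    unfolding \<psi>_def[abs_def]
    by (intro continuous_intros continuous_on_sum continuous_on_birkhoff_sum continuous_on
        continuous_on_ln_deriv) (use \<open>N > 0\<close> in auto)
  have per: "exp (\<psi> (x + 1)) = exp (\<psi> x)" for x
    by (simp add: \<psi>_def birkhoff_sum_periodic[where G = F and \<psi> = "ln_deriv F", OF lift
        ln_deriv_periodic])
  obtain H C where "C > 0" "circle_diffeo_lift H"
    and H': "\<And>x. (H has_real_derivative exp (\<psi> x) / C) (at x)"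
    using exists_lift_with_derivative[OF cont exp_gt_zero per] by blast
  have coboundary: "\<psi> (F x) + ln_deriv F x - \<psi> x = birkhoff_sum F (ln_deriv F) N x / N" for x
    using sum_birkhoff_sum_shift[of F "ln_deriv F" x N] \<open>N > 0\<close>
    by (simp add: \<psi>_def diff_divide_distrib[symmetric] sum_subtractf field_simps)
  have "exp (\<psi> (F x)) / C * deriv F x / (exp (\<psi> x) / C)
      = exp (birkhoff_sum F (ln_deriv F) N x / N)" for x
    using \<open>C > 0\<close> coboundary[of x]
    by (simp add: exp_ln_deriv[symmetric] exp_add[symmetric] exp_diff[symmetric])
  then show ?thesis
    using that \<open>circle_diffeo_lift H\<close> conjugate_has_derivative[OF \<open>circle_diffeo_lift H\<close> H'] by simp
qed

lemma exists_conjugate_derivative_near_1: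
  assumes "rot_num F \<notin> \<rat>" and "\<eta> > 0"
  shows "\<exists>H. circle_diffeo_lift H \<and>
    (\<forall>y. \<exists>d. ((\<lambda>y. H (F (inv H y))) has_real_derivative d) (at y) \<and> \<bar>d - 1\<bar> \<le> \<eta>)"
proof -
  obtain N0 where N0: "\<forall>N\<ge>N0. \<forall>x. \<bar>birkhoff_sum F (ln_deriv F) N x\<bar> \<le> ln (1 + \<eta>) * N"
    using birkhoff_sum_ln_deriv_sublinear[OF assms(1), of "ln (1 + \<eta>)"] \<open>\<eta> > 0\<close> by auto
  define N where "N = Suc N0"
  obtain H where "circle_diffeo_lift H" and H: "\<And>x. ((\<lambda>y. H (F (inv H y))) has_real_derivative
      exp (birkhoff_sum F (ln_deriv F) N x / N)) (at (H x))"
    using exists_conjugate_derivative_birkhoff_average[of N] by (auto simp: N_def)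
  interpret H: circle_diffeo H by (rule circle_diffeo.intro) fact
  have "\<bar>exp (birkhoff_sum F (ln_deriv F) N x / N) - 1\<bar> \<le> \<eta>" for x
  proof (rule abs_exp_minus_one_le[OF \<open>\<eta> > 0\<close>])
    show "\<bar>birkhoff_sum F (ln_deriv F) N x / N\<bar> \<le> ln (1 + \<eta>)"
      using N0[rule_format, of N x] by (simp add: N_def abs_div pos_divide_le_eq del: of_nat_Suc)
  qed
  then have "\<exists>d. ((\<lambda>y. H (F (inv H y))) has_real_derivative d) (at y) \<and> \<bar>d - 1\<bar> \<le> \<eta>" for y
    using H[of "inv H y"] by auto
  then show ?thesis using \<open>circle_diffeo_lift H\<close> by blast
qed

lemma conjugate_lift:
  assumes "circle_diffeo_lift H"
  shows "H (F (inv H (y + 1))) = H (F (inv H y)) + 1"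
proof -
  interpret H: circle_diffeo H by (rule circle_diffeo.intro) fact
  show ?thesis by (simp add: H.inv_lift lift H.lift)
qed

lemma conjugate_rotation_estimate:
  assumes "circle_diffeo_lift H" and displacement: "\<And>y. \<bar>H (F (inv H y)) - y - c\<bar> \<le> \<eta>"
  obtains B where "\<forall>m\<ge>1. \<bar>(F ^^ m) 0 / m - c\<bar> \<le> \<eta> + B / m"
proof -
  interpret H: circle_diffeo H by (rule circle_diffeo.intro) fact
  define G where "G y = H (F (inv H y))" for y
  have G_pow: "(G ^^ m) y = H ((F ^^ m) (inv H y))" for m y
    by (induction m) (simp_all add: G_def)
  obtain BH where BH: "\<And>z. \<bar>H z - z\<bar> \<le> BH"
  proof -
    have "bounded (range (\<lambda>z. H z - z))"
      by (intro periodic_bounded continuous_intros H.continuous_on) (simp add: H.lift)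
    then show ?thesis using that unfolding bounded_real by auto
  qed
  define a where "a = inv H 0"
  define B where "B = BH + \<bar>a\<bar> + 1"
  have "\<bar>(F ^^ m) 0 - m * c\<bar> \<le> m * \<eta> + B" for m
  proof -
    have "\<bar>H ((F ^^ m) a) - m * c\<bar> \<le> m * \<eta>"
      using funpow_displacement_le[where G = G, OF displacement[folded G_def], of m 0]
      by (simp add: G_pow a_def)
    moreover have "\<bar>(F ^^ m) a - (F ^^ m) 0\<bar> \<le> \<bar>a\<bar> + 1"
      using mono_lift_dist_le[where G = "F ^^ m", OF funpow_lift[where G = F, OF lift]
          mono_funpow_self[OF mono], of a 0] by simp
    ultimately show ?thesis using BH[of "(F ^^ m) a"] by (simp add: B_def abs_le_iff)
  qed
  then have "\<bar>(F ^^ m) 0 / m - c\<bar> \<le> \<eta> + B / m" if "m \<ge> 1" for m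
    using that by (intro abs_divide_diff_le)
  then show ?thesis using that by blast
qed

lemma conjugate_estimates:
  assumes "circle_diffeo_lift H"
    and near_1: "\<And>y. \<exists>d. ((\<lambda>y. H (F (inv H y))) has_real_derivative d) (at y) \<and> \<bar>d - 1\<bar> \<le> \<eta>"
  shows "\<bar>deriv (\<lambda>y. H (F (inv H y))) y - 1\<bar> \<le> \<eta>"
    and "\<bar>H (F (inv H y)) - y - H (F (inv H 0))\<bar> \<le> \<eta>"
    and "\<exists>B. \<forall>m\<ge>1. \<bar>(F ^^ m) 0 / m - H (F (inv H 0))\<bar> \<le> \<eta> + B / m"
proof -
  define G where "G y = H (F (inv H y))" for y
  have G': "(G has_real_derivative deriv G y) (at y)" and deriv_near: "\<bar>deriv G y - 1\<bar> \<le> \<eta>" for y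
    using near_1[of y] DERIV_imp_deriv unfolding G_def[abs_def] by blast+
  then show "\<bar>deriv (\<lambda>y. H (F (inv H y))) y - 1\<bar> \<le> \<eta>" by (simp add: G_def[abs_def])
  have displacement: "\<bar>G y - y - G 0\<bar> \<le> \<eta>" for y
    using lift_displacement_le[OF _ G' deriv_near] conjugate_lift[OF \<open>circle_diffeo_lift H\<close>]
    by (simp add: G_def)
  then show displacement': "\<bar>H (F (inv H y)) - y - H (F (inv H 0))\<bar> \<le> \<eta>" for y
    by (simp add: G_def)
  show "\<exists>B. \<forall>m\<ge>1. \<bar>(F ^^ m) 0 / m - H (F (inv H 0))\<bar> \<le> \<eta> + B / m"
    using displacement' by (rule conjugate_rotation_estimate[OF \<open>circle_diffeo_lift H\<close>]) blast
qed

lemma exists_conjugates_near_rotation: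
  assumes "rot_num F \<notin> \<rat>" and "\<And>n. \<eta> n > 0"
  obtains H c where "\<And>n. circle_diffeo_lift (H n)"
    "\<And>n y. \<bar>deriv (\<lambda>y. H n (F (inv (H n) y))) y - 1\<bar> \<le> \<eta> n"
    "\<And>n y. \<bar>H n (F (inv (H n) y)) - y - c n\<bar> \<le> \<eta> n"
    "\<And>n. \<exists>B. \<forall>m\<ge>1. \<bar>(F ^^ m) 0 / m - c n\<bar> \<le> \<eta> n + B / m"
proof -
  have "\<forall>n. \<exists>H. circle_diffeo_lift H \<and>
      (\<forall>y. \<exists>d. ((\<lambda>y. H (F (inv H y))) has_real_derivative d) (at y) \<and> \<bar>d - 1\<bar> \<le> \<eta> n)"
    using exists_conjugate_derivative_near_1[OF assms(1) assms(2)] by blast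
  then obtain H where H_lift: "\<And>n. circle_diffeo_lift (H n)" and H_deriv: "\<And>n y. \<exists>d.
      ((\<lambda>y. H n (F (inv (H n) y))) has_real_derivative d) (at y) \<and> \<bar>d - 1\<bar> \<le> \<eta> n"
    unfolding choice_iff by blast
  show ?thesis
    using that[OF H_lift conjugate_estimates[OF H_lift H_deriv]] .
qed

end

theorem mainTheorem3:
  fixes F :: "real \<Rightarrow> real"
  assumes "circle_diffeo_lift F"
    and "rot_num F \<notin> \<rat>"
  shows "\<exists>H :: nat \<Rightarrow> real \<Rightarrow> real. (\<forall>n. circle_diffeo_lift (H n)) \<and>
    (\<exists>k :: nat \<Rightarrow> int.
       uniform_limit UNIV (\<lambda>n x. H n (F (inv (H n) x)) - of_int (k n))
                          (\<lambda>x. x + rot_num F) sequentially \<and>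
       uniform_limit UNIV (\<lambda>n x. deriv (\<lambda>y. H n (F (inv (H n) y))) x)
                          (\<lambda>x. 1) sequentially)"
proof -
  interpret circle_diffeo F by (rule circle_diffeo.intro) fact
  define \<eta> :: "nat \<Rightarrow> real" where "\<eta> n = 1 / Suc n" for n
  have "\<eta> \<longlonglongrightarrow> 0" unfolding \<eta>_def by (rule LIMSEQ_inverse_real_of_nat[simplified inverse_eq_divide])
  obtain H c where H_lift: "\<And>n. circle_diffeo_lift (H n)"
    and deriv_near: "\<And>n y. \<bar>deriv (\<lambda>y. H n (F (inv (H n) y))) y - 1\<bar> \<le> \<eta> n"
    and displacement: "\<And>n y. \<bar>H n (F (inv (H n) y)) - y - c n\<bar> \<le> \<eta> n"
    and "\<And>n. \<exists>B. \<forall>m\<ge>1. \<bar>(F ^^ m) 0 / m - c n\<bar> \<le> \<eta> n + B / m"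
    using exists_conjugates_near_rotation[OF assms(2), of \<eta>] by (auto simp: \<eta>_def)
  then obtain B where "\<And>n. \<forall>m\<ge>1. \<bar>(F ^^ m) 0 / m - c n\<bar> \<le> \<eta> n + B n / m"
    by metis
  then have rot: "\<bar>rot_num F - c n\<bar> \<le> \<eta> n" for n
    unfolding rot_num_def using \<open>\<eta> \<longlonglongrightarrow> 0\<close> by (rule lim_dist_le_if_approximations)
  have "dist (H n (F (inv (H n) x)) - of_int 0) (x + rot_num F) \<le> 2 * \<eta> n" for n x
    using displacement[of n x] rot[of n] unfolding dist_real_def abs_le_iff of_int_0 diff_0_right
    by linarith
  then have "uniform_limit UNIV (\<lambda>n x. H n (F (inv (H n) x)) - of_int 0)
      (\<lambda>x. x + rot_num F) sequentially"
    using tendsto_mult_right_zero[OF \<open>\<eta> \<longlonglongrightarrow> 0\<close>, of 2] by (rule uniform_limit_if_dist_le)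
  moreover have "uniform_limit UNIV (\<lambda>n x. deriv (\<lambda>y. H n (F (inv (H n) y))) x)
      (\<lambda>x. 1) sequentially"
    using deriv_near \<open>\<eta> \<longlonglongrightarrow> 0\<close> by (intro uniform_limit_if_dist_le) (auto simp: dist_real_def)
  ultimately show ?thesis
    using H_lift by (intro exI[of _ H] exI[of _ "\<lambda>n. 0"] conjI allI)
qed

end
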